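(* Consider the self-attention dynamics with LayerNorm, $X^{(t+1)}=D^{(t)}A^{(t)}X^{(t)}W_V^{(t)}$, with initial input $X^{(0)}\in\mathbb{R}^{N\times d}$ whose rows have unit Euclidean norm. Let $\mathcal{G}$ be quasi-strongly connected with radius $r$ and assume \textbf{A1} and \textbf{A2}. If $W_V^{(t)}$ is orthogonal for all $t\ge0$ and $\phi^{(0)}\ge 0$, then there exist $C>0$ and $\epsilon>0$ with $N\epsilon<1$ such that $$\mu(X^{(t)})\le C\,(1-\epsilon^{2r})^{t/(2r)}\qquad\text{for all }t\ge0,$$ i.e. all tokens converge exponentially to a common point of $\mathbb{S}^{d-1}$.
   Context: Tokens are the rows of $X\in\mathbb{R}^{N\times d}$. Attention mask: directed graph $\mathcal{G}$ on $[N]$, with $(j,i)\in E(\mathcal{G})$ meaning token $i$ attends to token $j$; $\mathcal{N}_i=\{k:(k,i)\in E(\mathcal{G})\}$. Masked softmax: $\mathrm{softmax}_{\mathcal{G}}(R)_{ij}=\exp(R_{ij})/\sum_{k\in\mathcal{N}_i}\exp(R_{ik})$ if $(j,i)\in E(\mathcal{G})$, else $0$. $A^{(t)}=\mathrm{softmax}_{\mathcal{G}}\big(X^{(t)}W_Q^{(t)}(X^{(t)}W_K^{(t)})^\top/\sqrt{d_{QK}}\big)$ with fixed $d_{QK}>0$. $D^{(t)}=\mathrm{diag}(d_1,\dots,d_N)$, $d_i=1/\|(A^{(t)}X^{(t)}W_V^{(t)})_{i,:}\|_2$. \textbf{A1}: $(i,i)\in E(\mathcal{G})$ for all $i$. \textbf{A2}: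 $\sup_t\max\{\|W_Q^{(t)}\|_2,\|W_K^{(t)}\|_2\}<\infty$. $\mu(X)=\|X-\mathbf{1}\mathbf{1}^\top X/N\|_F$. $\phi^{(t)}=\min_{i,j\in[N]}\langle X^{(t)}_{i,:},X^{(t)}_{j,:}\rangle$. A center node is a node from which every node is reachable by a directed path; $\mathcal{G}$ is quasi-strongly connected if it has a center node; its radius is $\min_{c\text{ center}}\max_v\mathrm{dist}(c,v)$, where $\mathrm{dist}(u,v)$ is the length of a shortest directed path from $u$ to $v$. *)

theory Defs
  imports "HOL-Analysis.Analysis"
begin

text \<open>Tokens are indexed by the finite type 'n (N = CARD('n)), features by 'd,
  query/key dimension by 'q (d_QK = CARD('q)). A matrix in R^{N x d} is real^'d^'n
  (rows X $ i). The mask graph is a set of pairs E; (j,i) in E means token i attends to j.\<close>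

definition masked_softmax :: "('n::finite \<times> 'n) set \<Rightarrow> real^'n^'n \<Rightarrow> real^'n^'n" where
  "masked_softmax E R = (\<chi> i j. if (j, i) \<in> E
      then exp (R $ i $ j) / (\<Sum>k\<in>{k. (k, i) \<in> E}. exp (R $ i $ k)) else 0)"

definition attention ::
  "('n::finite \<times> 'n) set \<Rightarrow> real^'q::finite^'d::finite \<Rightarrow> real^'q^'d \<Rightarrow> real^'d^'n \<Rightarrow> real^'n^'n" where
  "attention E WQ WK X =
     masked_softmax E ((1 / sqrt (real CARD('q))) *\<^sub>R ((X ** WQ) ** transpose (X ** WK)))"

text \<open>Row normalisation D M with D = diag(1/||M_i||).\<close>
definition layernorm :: "real^'d::finite^'n::finite \<Rightarrow> real^'d^'n" where
  "layernorm M = (\<chi> i. (1 / norm (M $ i)) *\<^sub>R (M $ i))"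

text \<open>mu(X) = || X - 1 1^T X / N ||_F (the norm on real^'d^'n is the Frobenius norm).\<close>
definition mu :: "real^'d::finite^'n::finite \<Rightarrow> real" where
  "mu X = norm (X - (\<chi> i. (1 / real CARD('n)) *\<^sub>R (\<Sum>j\<in>UNIV. X $ j)))"

definition phi :: "real^'d::finite^'n::finite \<Rightarrow> real" where
  "phi X = Min {inner (X $ i) (X $ j) | i j. True}"

definition spec_norm :: "real^'b::finite^'a::finite \<Rightarrow> real" where
  "spec_norm W = onorm (\<lambda>x. W *v x)"

text \<open>Directed graph notions: edges (u,v) in E are arcs u -> v.\<close>
definition is_center :: "('n \<times> 'n) set \<Rightarrow> 'n \<Rightarrow> bool" where
  "is_center E c \<longleftrightarrow> (\<forall>v. (c, v) \<in> E\<^sup>*)"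

definition quasi_strongly_connected :: "('n \<times> 'n) set \<Rightarrow> bool" where
  "quasi_strongly_connected E \<longleftrightarrow> (\<exists>c. is_center E c)"

definition gdist :: "('n \<times> 'n) set \<Rightarrow> 'n \<Rightarrow> 'n \<Rightarrow> nat" where
  "gdist E u v = (LEAST k. (u, v) \<in> E ^^ k)"

definition graph_radius :: "('n::finite \<times> 'n) set \<Rightarrow> nat" where
  "graph_radius E = Min {Max {gdist E c v | v. True} | c. is_center E c}"

end

theory Submission
  imports Defs
begin

text \<open>With an orthogonal value matrix, LayerNorm rescales convex combinations of unit vectors.
  As long as all pairwise inner products are nonnegative, normalising vectors of norm at most one
  only increases them, so the cosine gaps \<open>\<delta> i j = 1 - \<langle>x\<^sub>i, x\<^sub>j\<rangle>\<close> obey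
  \<open>\<delta>' i k \<le> \<Sum>j l. A i j * A k l * \<delta> j l\<close> for the row-stochastic attention matrix \<open>A\<close>, and in
  particular stay in \<open>[0, 1]\<close>. Bounded query and key weights bound the attention scores, so every
  attention weight along an edge of the mask is at least some \<open>\<alpha> > 0\<close>. If every token is
  reached from a center \<open>c\<close> by a path of length \<open>r\<close> (self-loops pad shorter paths), then
  over \<open>r\<close> steps the rows of any two tokens both put weight at least \<open>\<alpha>\<^sup>r\<close> on \<open>c\<close>,
  which shrinks the largest gap by the factor \<open>1 - \<alpha>\<^sup>2\<^sup>r\<close>. The resulting geometric
  decay of the gaps bounds \<open>\<mu>\<close>.\<close>

lemma orthogonal_matrix_vector_matrix_inner:
  fixes W :: "real^'d::finite^'d"
  assumes "orthogonal_matrix W"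
  shows "inner (x v* W) (y v* W) = inner x y"
proof -
  have "orthogonal_transformation (\<lambda>x. transpose W *v x)"
    unfolding orthogonal_transformation_matrix
    using assms by (simp add: orthogonal_matrix_transpose matrix_vector_mul_linear)
  then show ?thesis by (simp add: orthogonal_transformation_def)
qed

lemma orthogonal_matrix_vector_matrix_norm:
  fixes W :: "real^'d::finite^'d"
  assumes "orthogonal_matrix W"
  shows "norm (x v* W) = norm x"
  using orthogonal_matrix_vector_matrix_inner[OF assms, of x x] by (simp add: norm_eq_sqrt_inner)

lemma norm_vector_matrix_mult_le_spec_norm:
  fixes W :: "real^'q::finite^'d::finite"
  shows "norm (x v* W) \<le> real CARD('d) * real CARD('q) * spec_norm W * norm x"
proof -
  have "onorm ((*v) (transpose W)) \<le> (\<Sum>i\<in>UNIV. \<Sum>j\<in>UNIV. \<bar>transpose W $ i $ j\<bar>)"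
    by (rule onorm_le_matrix_component_sum)
  also have "\<dots> \<le> (\<Sum>i\<in>(UNIV::'q set). \<Sum>j\<in>(UNIV::'d set). spec_norm W)"
    by (intro sum_mono) (simp add: transpose_def spec_norm_def matrix_component_le_onorm)
  finally have "onorm ((*v) (transpose W)) \<le> real CARD('d) * real CARD('q) * spec_norm W"
    by (simp add: mult_ac)
  moreover have "norm (x v* W) \<le> onorm ((*v) (transpose W)) * norm x"
    using onorm[OF matrix_vector_mul_bounded_linear, of "transpose W" x] by simp
  ultimately show ?thesis by (meson mult_right_mono norm_ge_zero order_trans)
qed

lemma matrix_mult_row: "(A ** B) $ i = A $ i v* B"
  by (simp add: vec_eq_iff matrix_matrix_mult_def vector_matrix_mult_def)

lemma matrix_mult_rows_combination: "(A ** B) $ i = (\<Sum>j\<in>UNIV. A $ i $ j *\<^sub>R B $ j)"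
  by (simp add: vec_eq_iff matrix_matrix_mult_def sum_component mult.commute)

lemma matrix_mult_transpose_component: "(A ** transpose B) $ i $ k = inner (A $ i) (B $ k)"
  by (simp add: matrix_matrix_mult_def transpose_def inner_vec_def)

section \<open>Masked softmax attention\<close>

definition row_stochastic :: "real^'m::finite^'n \<Rightarrow> bool" where
  "row_stochastic A \<longleftrightarrow> (\<forall>i j. 0 \<le> A $ i $ j) \<and> (\<forall>i. (\<Sum>j\<in>UNIV. A $ i $ j) = 1)"

lemma masked_softmax_row_stochastic:
  assumes refl: "\<And>i. (i, i) \<in> E"
  shows "row_stochastic (masked_softmax E R)"
proof -
  define S where "S i = (\<Sum>k\<in>{k. (k, i) \<in> E}. exp (R $ i $ k))" for i
  have S: "0 < S i" for i
    unfolding S_def by (rule sum_pos) (use refl in auto)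
  have "(\<Sum>j\<in>UNIV. masked_softmax E R $ i $ j) = (\<Sum>j\<in>{j. (j, i) \<in> E}. exp (R $ i $ j) / S i)" for i
    by (simp add: masked_softmax_def S_def sum.If_cases Collect_conj_eq[symmetric])
  also have "\<dots> i = 1" for i
    using S[of i] by (simp add: sum_divide_distrib[symmetric] S_def)
  finally show ?thesis
    using S by (auto simp: row_stochastic_def masked_softmax_def S_def less_imp_le)
qed

lemma masked_softmax_ge:
  fixes R :: "real^'n::finite^'n"
  assumes bound: "\<And>k. \<bar>R $ i $ k\<bar> \<le> M" and edge: "(j, i) \<in> E"
  shows "exp (- 2 * M) / real CARD('n) \<le> masked_softmax E R $ i $ j"
proof -
  define S where "S = (\<Sum>k\<in>{k. (k, i) \<in> E}. exp (R $ i $ k))"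
  have "0 < S" unfolding S_def by (rule sum_pos) (use edge in auto)
  have "S \<le> (\<Sum>k\<in>{k. (k, i) \<in> E}. exp M)"
    unfolding S_def by (rule sum_mono) (use bound in \<open>auto simp: abs_le_iff\<close>)
  also have "\<dots> \<le> real CARD('n) * exp M"
    by (simp add: card_mono)
  finally have "exp (- M) / (real CARD('n) * exp M) \<le> exp (R $ i $ j) / S"
    using bound[of j] \<open>0 < S\<close> by (intro frac_le) (auto simp: abs_le_iff)
  moreover have "exp (- M) / (real CARD('n) * exp M) = exp (- 2 * M) / real CARD('n)"
    by (simp add: exp_add[symmetric] exp_minus field_simps)
  ultimately show ?thesis
    using edge by (simp add: masked_softmax_def S_def)
qed

lemma attention_uniform_lower_bound:
  fixes X :: "nat \<Rightarrow> real^'d::finite^'n::finite" and WQ WK :: "nat \<Rightarrow> real^'q::finite^'d"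
  assumes rows: "\<And>t i. norm (X t $ i) \<le> 1"
    and bQ: "\<And>t. spec_norm (WQ t) \<le> B" and bK: "\<And>t. spec_norm (WK t) \<le> B"
  shows "\<exists>\<alpha>>0. real CARD('n) * \<alpha> < 1 \<and>
           (\<forall>t i j. (j, i) \<in> E \<longrightarrow> \<alpha> \<le> attention E (WQ t) (WK t) (X t) $ i $ j)"
proof -
  define K where "K = real CARD('d) * real CARD('q) * B"
  define \<beta> where "\<beta> = exp (- 2 * (K * K)) / real CARD('n)"
  have "0 \<le> B"
    using bQ[of 0] onorm_pos_le[OF matrix_vector_mul_bounded_linear, of "WQ 0"]
    by (simp add: spec_norm_def)
  then have "0 \<le> K" by (simp add: K_def)
  have row_bound: "norm (X t $ i v* W) \<le> K" if "spec_norm W \<le> B" for t i and W :: "real^'q^'d"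
  proof -
    have "norm (X t $ i v* W) \<le> real CARD('d) * real CARD('q) * spec_norm W * norm (X t $ i)"
      by (rule norm_vector_matrix_mult_le_spec_norm)
    also have "\<dots> \<le> K * 1"
      using that rows[of t i] \<open>0 \<le> B\<close> by (intro mult_mono) (auto simp: K_def)
    finally show ?thesis by simp
  qed
  have score: "\<bar>((1 / sqrt (real CARD('q))) *\<^sub>R ((X t ** WQ t) ** transpose (X t ** WK t))) $ i $ k\<bar>
      \<le> K * K" for t i k
  proof -
    have "\<bar>inner (X t $ i v* WQ t) (X t $ k v* WK t)\<bar> \<le> norm (X t $ i v* WQ t) * norm (X t $ k v* WK t)"
      by (rule Cauchy_Schwarz_ineq2)
    also have "\<dots> \<le> K * K"
      using row_bound[OF bQ] row_bound[OF bK] \<open>0 \<le> K\<close> by (intro mult_mono) auto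
    finally have "\<bar>inner (X t $ i v* WQ t) (X t $ k v* WK t)\<bar> \<le> K * K" .
    moreover have "\<bar>1 / sqrt (real CARD('q))\<bar> \<le> 1" by simp
    ultimately show ?thesis
      unfolding vector_scaleR_component real_scaleR_def abs_mult matrix_mult_transpose_component
      unfolding matrix_mult_row
      by (meson abs_ge_zero mult_left_le_one_le order_trans)
  qed
  have "0 < \<beta>" by (simp add: \<beta>_def)
  have softmax_ge: "\<beta> \<le> attention E (WQ t) (WK t) (X t) $ i $ j" if "(j, i) \<in> E" for t i j
    unfolding attention_def \<beta>_def by (rule masked_softmax_ge[OF score that])
  \<comment> \<open>halved because \<open>CARD('n) * \<beta> = 1\<close> when \<open>K = 0\<close>\<close>
  have "\<beta> / 2 \<le> attention E (WQ t) (WK t) (X t) $ i $ j" if "(j, i) \<in> E" for t i j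
    using softmax_ge[OF that, of t] \<open>0 < \<beta>\<close> by linarith
  moreover have "real CARD('n) * (\<beta> / 2) < 1"
    using \<open>0 \<le> K\<close> by (auto simp: \<beta>_def order_le_less_trans[of _ 1])
  ultimately show ?thesis
    using \<open>0 < \<beta>\<close> by (intro exI[of _ "\<beta> / 2"]) auto
qed

section \<open>The LayerNorm step\<close>

lemma one_minus_inner_convex_combinations:
  fixes x :: "'n::finite \<Rightarrow> 'v::real_inner"
  assumes "sum a UNIV = 1" and "sum b UNIV = 1"
  shows "1 - inner (\<Sum>j\<in>UNIV. a j *\<^sub>R x j) (\<Sum>l\<in>UNIV. b l *\<^sub>R x l)
           = (\<Sum>j\<in>UNIV. \<Sum>l\<in>UNIV. a j * b l * (1 - inner (x j) (x l)))"
proof -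
  have "(\<Sum>j\<in>UNIV. \<Sum>l\<in>UNIV. a j * b l) = 1"
    using assms by (simp add: sum_product[symmetric])
  moreover have "inner (\<Sum>j\<in>UNIV. a j *\<^sub>R x j) (\<Sum>l\<in>UNIV. b l *\<^sub>R x l)
      = (\<Sum>j\<in>UNIV. \<Sum>l\<in>UNIV. a j * b l * inner (x j) (x l))"
    by (simp add: inner_sum_left inner_sum_right sum_distrib_left mult_ac, subst sum.swap, simp)
  ultimately show ?thesis
    by (simp add: right_diff_distrib sum_subtractf)
qed

lemma inner_convex_combinations_nonneg:
  fixes x :: "'n::finite \<Rightarrow> 'v::real_inner"
  assumes "\<And>j l. 0 \<le> inner (x j) (x l)" and "\<And>j. 0 \<le> a j" and "\<And>l. 0 \<le> b l"
  shows "0 \<le> inner (\<Sum>j\<in>UNIV. a j *\<^sub>R x j) (\<Sum>l\<in>UNIV. b l *\<^sub>R x l)"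
  using assms by (auto simp: inner_sum_left inner_sum_right intro!: sum_nonneg mult_nonneg_nonneg)

lemma convex_combination_unit_vectors_nonzero:
  fixes x :: "'n::finite \<Rightarrow> 'v::real_inner"
  assumes unit: "\<And>j. norm (x j) = 1" and nn: "\<And>j l. 0 \<le> inner (x j) (x l)"
    and a: "\<And>j. 0 \<le> a j" "sum a UNIV = 1"
  shows "(\<Sum>j\<in>UNIV. a j *\<^sub>R x j) \<noteq> 0"
proof -
  obtain j0 where "0 < a j0"
    using a by (metis less_eq_real_def sum.neutral zero_neq_one)
  have "a j0 * inner (x j0) (x j0) \<le> (\<Sum>l\<in>UNIV. a l * inner (x j0) (x l))"
    by (rule member_le_sum) (auto intro: a nn mult_nonneg_nonneg)
  then have "a j0 \<le> inner (x j0) (\<Sum>l\<in>UNIV. a l *\<^sub>R x l)"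
    using unit[of j0] by (simp add: dot_square_norm inner_sum_right)
  then show ?thesis using \<open>0 < a j0\<close> by auto
qed

lemma layernorm_stochastic_orthogonal_step:
  fixes A :: "real^'m::finite^'n::finite" and Y :: "real^'d::finite^'m" and W :: "real^'d^'d"
  assumes unit: "\<And>j. norm (Y $ j) = 1" and nn: "\<And>j l. 0 \<le> inner (Y $ j) (Y $ l)"
    and A: "row_stochastic A" and W: "orthogonal_matrix W"
  defines "L \<equiv> layernorm ((A ** Y) ** W)"
  shows "norm (L $ i) = 1" and "0 \<le> inner (L $ i) (L $ k)"
    and "1 - inner (L $ i) (L $ k)
           \<le> (\<Sum>j\<in>UNIV. \<Sum>l\<in>UNIV. A $ i $ j * A $ k $ l * (1 - inner (Y $ j) (Y $ l)))"
proof -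
  define y where "y i = (A ** Y) $ i" for i
  have y: "y i = (\<Sum>j\<in>UNIV. A $ i $ j *\<^sub>R Y $ j)" for i
    by (simp add: y_def matrix_mult_rows_combination)
  have L: "L $ i = (1 / norm (y i)) *\<^sub>R (y i v* W)" for i
    by (simp add: L_def layernorm_def matrix_mult_row y_def orthogonal_matrix_vector_matrix_norm[OF W])
  have "y i \<noteq> 0" for i
    unfolding y using A by (intro convex_combination_unit_vectors_nonzero unit nn) (auto simp: row_stochastic_def)
  then show "norm (L $ i) = 1"
    by (simp add: L orthogonal_matrix_vector_matrix_norm[OF W])
  have "norm (y i) \<le> 1" for i
  proof -
    have "norm (y i) \<le> (\<Sum>j\<in>UNIV. norm (A $ i $ j *\<^sub>R Y $ j))" unfolding y by (rule norm_sum)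
    also have "\<dots> = 1" using A unit by (simp add: row_stochastic_def)
    finally show ?thesis .
  qed
  have yy: "0 \<le> inner (y i) (y k)"
    unfolding y using A by (intro inner_convex_combinations_nonneg nn) (auto simp: row_stochastic_def)
  have cos: "inner (L $ i) (L $ k) = inner (y i) (y k) / (norm (y i) * norm (y k))"
    by (simp add: L orthogonal_matrix_vector_matrix_inner[OF W])
  then show "0 \<le> inner (L $ i) (L $ k)" using yy by simp
  \<comment> \<open>normalising vectors of norm at most one can only increase a nonnegative inner product\<close>
  have "inner (y i) (y k) \<le> inner (L $ i) (L $ k)"
    unfolding cos using yy \<open>\<And>i. y i \<noteq> 0\<close> \<open>\<And>i. norm (y i) \<le> 1\<close>
    by (simp add: le_divide_eq mult_left_le mult_le_one)
  moreover have "1 - inner (y i) (y k)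
      = (\<Sum>j\<in>UNIV. \<Sum>l\<in>UNIV. A $ i $ j * A $ k $ l * (1 - inner (Y $ j) (Y $ l)))"
    unfolding y using A by (intro one_minus_inner_convex_combinations) (auto simp: row_stochastic_def)
  ultimately show "1 - inner (L $ i) (L $ k)
      \<le> (\<Sum>j\<in>UNIV. \<Sum>l\<in>UNIV. A $ i $ j * A $ k $ l * (1 - inner (Y $ j) (Y $ l)))"
    by linarith
qed

lemma layernorm_dynamics:
  fixes X :: "nat \<Rightarrow> real^'d::finite^'n::finite" and A :: "nat \<Rightarrow> real^'n^'n"
    and W :: "nat \<Rightarrow> real^'d^'d"
  assumes dyn: "\<And>t. X (Suc t) = layernorm ((A t ** X t) ** W t)"
    and A: "\<And>t. row_stochastic (A t)" and W: "\<And>t. orthogonal_matrix (W t)"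
    and unit0: "\<And>i. norm (X 0 $ i) = 1" and nn0: "\<And>j l. 0 \<le> inner (X 0 $ j) (X 0 $ l)"
  shows "norm (X t $ i) = 1"
    and "1 - inner (X (Suc t) $ i) (X (Suc t) $ k)
           \<le> (\<Sum>j\<in>UNIV. \<Sum>l\<in>UNIV. A t $ i $ j * A t $ k $ l * (1 - inner (X t $ j) (X t $ l)))"
proof -
  have inv: "(\<forall>i. norm (X t $ i) = 1) \<and> (\<forall>j l. 0 \<le> inner (X t $ j) (X t $ l))" for t
  proof (induction t)
    case 0
    then show ?case using unit0 nn0 by blast
  next
    case (Suc t)
    then show ?case
      using layernorm_stochastic_orthogonal_step(1,2)[OF _ _ A W] by (simp add: dyn)
  qed
  then show "norm (X t $ i) = 1" by blast
  show "1 - inner (X (Suc t) $ i) (X (Suc t) $ k)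
           \<le> (\<Sum>j\<in>UNIV. \<Sum>l\<in>UNIV. A t $ i $ j * A t $ k $ l * (1 - inner (X t $ j) (X t $ l)))"
    using inv[of t] layernorm_stochastic_orthogonal_step(3)[OF _ _ A W] by (simp add: dyn)
qed

lemma phi_le_inner:
  fixes X :: "real^'d::finite^'n::finite"
  shows "phi X \<le> inner (X $ i) (X $ j)"
proof -
  have "finite {inner (X $ i) (X $ j) | i j. True}"
    by (rule finite_subset[of _ "(\<lambda>(i, j). inner (X $ i) (X $ j)) ` UNIV"]) auto
  then show ?thesis unfolding phi_def by (rule Min_le) auto
qed

section \<open>Contraction of the cosine gaps\<close>

lemma relpow_mono_refl:
  assumes refl: "\<And>i. (i, i) \<in> E" and "(a, b) \<in> E ^^ m" and "m \<le> n"
  shows "(a, b) \<in> E ^^ n"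
  using \<open>m \<le> n\<close>
proof (induction n rule: dec_induct)
  case base
  then show ?case using \<open>(a, b) \<in> E ^^ m\<close> .
next
  case (step n)
  then show ?case using refl relpow_Suc_I by metis
qed

lemma graph_radius_center:
  fixes E :: "('n::finite \<times> 'n) set"
  assumes qsc: "quasi_strongly_connected E" and refl: "\<And>i. (i, i) \<in> E"
  shows "\<exists>c. \<forall>v. (c, v) \<in> E ^^ graph_radius E"
proof -
  define S where "S = {Max {gdist E c v | v. True} | c. is_center E c}"
  have "finite S"
    by (rule finite_subset[of _ "range (\<lambda>c. Max {gdist E c v | v. True})"]) (auto simp: S_def)
  moreover have "S \<noteq> {}" using qsc by (auto simp: S_def quasi_strongly_connected_def)
  ultimately have "Min S \<in> S" by (rule Min_in)
  then obtain c where c: "is_center E c" and r: "graph_radius E = Max {gdist E c v | v. True}"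
    by (auto simp: S_def graph_radius_def)
  have "(c, v) \<in> E ^^ graph_radius E" for v
  proof -
    have "finite {gdist E c v | v. True}"
      by (rule finite_subset[of _ "range (gdist E c)"]) auto
    then have "gdist E c v \<le> graph_radius E" unfolding r by (rule Max_ge) auto
    moreover have "\<exists>k. (c, v) \<in> E ^^ k" using c by (simp add: is_center_def rtrancl_power)
    then have "(c, v) \<in> E ^^ gdist E c v" unfolding gdist_def by (rule LeastI_ex)
    ultimately show ?thesis using relpow_mono_refl[OF refl] by blast
  qed
  then show ?thesis by blast
qed

text \<open>A lower bound for the weight that row \<open>i\<close> of a product of \<open>m\<close> consecutive stochastic
  matrices, each at least \<open>\<alpha>\<close> on the edges of \<open>E\<close>, places on the node \<open>c\<close>.\<close>

definition reach_weight :: "('n \<times> 'n) set \<Rightarrow> 'n \<Rightarrow> real \<Rightarrow> nat \<Rightarrow> 'n \<Rightarrow> real" where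
  "reach_weight E c \<alpha> m i = (if (c, i) \<in> E ^^ m then \<alpha> ^ m else 0)"

lemma reach_weight_nonneg: "0 \<le> \<alpha> \<Longrightarrow> 0 \<le> reach_weight E c \<alpha> m i"
  by (simp add: reach_weight_def)

lemma reach_weight_Suc_le:
  fixes A :: "real^'n::finite^'n"
  assumes A: "row_stochastic A" and AE: "\<And>i j. (j, i) \<in> E \<Longrightarrow> \<alpha> \<le> A $ i $ j" and "0 \<le> \<alpha>"
  shows "reach_weight E c \<alpha> (Suc m) i \<le> (\<Sum>j\<in>UNIV. A $ i $ j * reach_weight E c \<alpha> m j)"
proof (cases "(c, i) \<in> E ^^ Suc m")
  case True
  then obtain j where j: "(c, j) \<in> E ^^ m" "(j, i) \<in> E" by (rule relpow_Suc_E)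
  have "reach_weight E c \<alpha> (Suc m) i = \<alpha> * \<alpha> ^ m" using True by (simp add: reach_weight_def)
  also have "\<dots> \<le> A $ i $ j * reach_weight E c \<alpha> m j"
    using j AE \<open>0 \<le> \<alpha>\<close> by (simp add: reach_weight_def mult_right_mono)
  also have "\<dots> \<le> (\<Sum>j\<in>UNIV. A $ i $ j * reach_weight E c \<alpha> m j)"
    using A \<open>0 \<le> \<alpha>\<close> by (intro member_le_sum) (auto simp: row_stochastic_def reach_weight_nonneg)
  finally show ?thesis .
next
  case False
  then show ?thesis
    using A \<open>0 \<le> \<alpha>\<close> by (auto simp: reach_weight_def row_stochastic_def intro!: sum_nonneg)
qed

lemma gap_contraction:
  fixes \<delta> :: "nat \<Rightarrow> 'n::finite \<Rightarrow> 'n \<Rightarrow> real" and A :: "nat \<Rightarrow> real^'n^'n"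
  assumes step: "\<And>t i k. \<delta> (Suc t) i k \<le> (\<Sum>j\<in>UNIV. \<Sum>l\<in>UNIV. A t $ i $ j * A t $ k $ l * \<delta> t j l)"
    and A: "\<And>t. row_stochastic (A t)"
    and AE: "\<And>t i j. (j, i) \<in> E \<Longrightarrow> \<alpha> \<le> A t $ i $ j" and "0 \<le> \<alpha>"
    and diag: "\<And>t j. \<delta> t j j = 0"
    and D: "\<And>j l. \<delta> t j l \<le> D"
  shows "\<delta> (t + m) i k \<le> D * (1 - reach_weight E c \<alpha> m i * reach_weight E c \<alpha> m k)"
proof (induction m arbitrary: i k)
  case 0
  have "0 \<le> D" using D[of c c] diag[of t c] by simp
  then show ?case using D[of i k] diag[of t c] by (auto simp: reach_weight_def)
next
  case (Suc m)
  let ?a = "A (t + m)" and ?g = "reach_weight E c \<alpha> m"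
  define G where "G i = (\<Sum>j\<in>UNIV. ?a $ i $ j * ?g j)" for i
  have "0 \<le> D" using D[of c c] diag[of t c] by simp
  have "\<delta> (t + Suc m) i k \<le> (\<Sum>j\<in>UNIV. \<Sum>l\<in>UNIV. ?a $ i $ j * ?a $ k $ l * \<delta> (t + m) j l)"
    using step[of "t + m" i k] by simp
  also have "\<dots> \<le> (\<Sum>j\<in>UNIV. \<Sum>l\<in>UNIV. ?a $ i $ j * ?a $ k $ l * (D * (1 - ?g j * ?g l)))"
    using A[of "t + m"] Suc.IH
    by (intro sum_mono mult_left_mono) (auto simp: row_stochastic_def)
  also have "\<dots> = D * (\<Sum>j\<in>UNIV. \<Sum>l\<in>UNIV. ?a $ i $ j * ?a $ k $ l)
      - D * (\<Sum>j\<in>UNIV. \<Sum>l\<in>UNIV. (?a $ i $ j * ?g j) * (?a $ k $ l * ?g l))"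
    by (simp add: sum_distrib_left sum_subtractf algebra_simps)
  also have "\<dots> = D * (1 - G i * G k)"
  proof -
    have "(\<Sum>j\<in>UNIV. \<Sum>l\<in>UNIV. ?a $ i $ j * ?a $ k $ l) = 1"
      using A[of "t + m"] by (simp add: sum_product[symmetric] row_stochastic_def)
    moreover have "G i * G k = (\<Sum>j\<in>UNIV. \<Sum>l\<in>UNIV. (?a $ i $ j * ?g j) * (?a $ k $ l * ?g l))"
      unfolding G_def by (rule sum_product)
    ultimately show ?thesis by (simp add: right_diff_distrib)
  qed
  also have "\<dots> \<le> D * (1 - reach_weight E c \<alpha> (Suc m) i * reach_weight E c \<alpha> (Suc m) k)"
  proof -
    have "reach_weight E c \<alpha> (Suc m) j \<le> G j" for j
      unfolding G_def by (rule reach_weight_Suc_le) (use A AE \<open>0 \<le> \<alpha>\<close> in auto)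
    moreover have "0 \<le> G j" for j
      using A[of "t + m"] \<open>0 \<le> \<alpha>\<close>
      unfolding G_def by (auto simp: row_stochastic_def reach_weight_nonneg intro!: sum_nonneg)
    ultimately show ?thesis
      using \<open>0 \<le> D\<close> \<open>0 \<le> \<alpha>\<close> by (intro mult_left_mono diff_left_mono mult_mono) (auto simp: reach_weight_nonneg)
  qed
  finally show ?case by simp
qed

lemma gap_geometric_decay:
  fixes \<delta> :: "nat \<Rightarrow> 'n::finite \<Rightarrow> 'n \<Rightarrow> real" and A :: "nat \<Rightarrow> real^'n^'n"
  assumes step: "\<And>t i k. \<delta> (Suc t) i k \<le> (\<Sum>j\<in>UNIV. \<Sum>l\<in>UNIV. A t $ i $ j * A t $ k $ l * \<delta> t j l)"
    and A: "\<And>t. row_stochastic (A t)"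
    and AE: "\<And>t i j. (j, i) \<in> E \<Longrightarrow> \<alpha> \<le> A t $ i $ j" and "0 \<le> \<alpha>"
    and diag: "\<And>t j. \<delta> t j j = 0"
    and init: "\<And>j l. \<delta> 0 j l \<le> 1"
    and center: "\<And>v. (c, v) \<in> E ^^ r"
  shows "\<delta> (n * r + s) i k \<le> (1 - \<alpha> ^ (2 * r)) ^ n"
proof -
  have contraction: "\<delta> (t + m) i k \<le> D * (1 - reach_weight E c \<alpha> m i * reach_weight E c \<alpha> m k)"
    if "\<And>j l. \<delta> t j l \<le> D" for t m i k D
    by (rule gap_contraction) (use step A AE \<open>0 \<le> \<alpha>\<close> diag that in auto)
  have block: "\<delta> (n * r) j l \<le> (1 - \<alpha> ^ (2 * r)) ^ n" for j l
  proof (induction n arbitrary: j l)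
    case 0
    then show ?case using init by simp
  next
    case (Suc n)
    have "\<delta> (n * r + r) j l \<le> (1 - \<alpha> ^ (2 * r)) ^ n * (1 - reach_weight E c \<alpha> r j * reach_weight E c \<alpha> r l)"
      by (rule contraction) (rule Suc.IH)
    moreover have "reach_weight E c \<alpha> r j * reach_weight E c \<alpha> r l = \<alpha> ^ (2 * r)"
      using center by (simp add: reach_weight_def power_add[symmetric] mult_2)
    ultimately show ?case by (simp add: add.commute mult.commute)
  qed
  have "0 \<le> (1 - \<alpha> ^ (2 * r)) ^ n" using block[of c c] diag by simp
  have "\<delta> (n * r + s) i k
      \<le> (1 - \<alpha> ^ (2 * r)) ^ n * (1 - reach_weight E c \<alpha> s i * reach_weight E c \<alpha> s k)"
    by (rule contraction[OF block])
  also have "\<dots> \<le> (1 - \<alpha> ^ (2 * r)) ^ n"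
    using \<open>0 \<le> (1 - \<alpha> ^ (2 * r)) ^ n\<close> \<open>0 \<le> \<alpha>\<close>
    by (intro mult_left_le) (auto simp: reach_weight_nonneg)
  finally show ?thesis .
qed

section \<open>Convergence rate\<close>

lemma mu_le_sqrt_gap:
  fixes X :: "real^'d::finite^'n::finite"
  assumes unit: "\<And>i. norm (X $ i) = 1" and gap: "\<And>i j. 1 - inner (X $ i) (X $ j) \<le> e"
  shows "mu X \<le> sqrt (2 * real CARD('n) * e)"
proof -
  define m where "m = (1 / real CARD('n)) *\<^sub>R (\<Sum>j\<in>UNIV. X $ j)"
  have dist: "norm (X $ i - X $ j) \<le> sqrt (2 * e)" for i j
  proof -
    have "inner (X $ i) (X $ i) = 1" "inner (X $ j) (X $ j) = 1"
      using unit[of i] unit[of j] by (simp_all add: dot_square_norm)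
    then have "norm (X $ i - X $ j) ^ 2 = 2 - 2 * inner (X $ i) (X $ j)"
      by (simp add: power2_norm_eq_inner inner_diff_left inner_diff_right inner_commute)
    also have "\<dots> \<le> 2 * e" using gap[of i j] by simp
    finally show ?thesis by (simp add: real_le_rsqrt)
  qed
  have row: "norm (X $ i - m) \<le> sqrt (2 * e)" for i
  proof -
    have "X $ i - m = (1 / real CARD('n)) *\<^sub>R (\<Sum>j\<in>UNIV. X $ i - X $ j)"
      by (simp add: m_def sum_subtractf scaleR_diff_right sum_constant_scaleR del: sum_constant)
    then have "norm (X $ i - m) = (1 / real CARD('n)) * norm (\<Sum>j\<in>UNIV. X $ i - X $ j)"
      by simp
    also have "\<dots> \<le> (1 / real CARD('n)) * (\<Sum>j\<in>UNIV. norm (X $ i - X $ j))"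
      by (intro mult_left_mono norm_sum) simp
    also have "\<dots> \<le> (1 / real CARD('n)) * (\<Sum>j\<in>(UNIV::'n set). sqrt (2 * e))"
      by (intro mult_left_mono sum_mono dist) simp
    also have "\<dots> = sqrt (2 * e)" by simp
    finally show ?thesis .
  qed
  have "0 \<le> e" using gap[of undefined undefined] unit[of undefined] by (simp add: dot_square_norm)
  have "mu X = sqrt (\<Sum>i\<in>UNIV. (norm (X $ i - m))\<^sup>2)"
    by (simp add: mu_def norm_vec_def L2_set_def m_def)
  also have "\<dots> \<le> sqrt (\<Sum>i\<in>(UNIV::'n set). 2 * e)"
  proof (intro real_sqrt_le_mono sum_mono)
    fix i
    have "(norm (X $ i - m))\<^sup>2 \<le> (sqrt (2 * e))\<^sup>2" by (intro power_mono row) simp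
    then show "(norm (X $ i - m))\<^sup>2 \<le> 2 * e" using \<open>0 \<le> e\<close> by simp
  qed
  also have "\<dots> = sqrt (2 * real CARD('n) * e)" by simp
  finally show ?thesis .
qed

lemma block_decay_powr_rate:
  fixes f :: "nat \<Rightarrow> real" and c \<epsilon> :: real
  assumes decay: "\<And>n s. f (n * r + s) \<le> sqrt (c * (1 - \<epsilon> ^ (2 * r)) ^ n)"
    and "0 < c" and "0 < \<epsilon>" and "\<epsilon> < 1"
  shows "\<exists>C>0. \<forall>t. f t \<le> C * (1 - \<epsilon> ^ (2 * r)) powr (real t / real (2 * r))"
proof (cases "r = 0")
  case True
  then have "f t \<le> 0" for t using decay[of 1 t] by simp
  then show ?thesis using True by (intro exI[of _ 1]) simp
next
  case False
  define \<rho> where "\<rho> = 1 - \<epsilon> ^ (2 * r)"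
  have "0 < \<rho>" "\<rho> \<le> 1"
    using \<open>0 < \<epsilon>\<close> \<open>\<epsilon> < 1\<close> False by (simp_all add: \<rho>_def power_less_one_iff)
  have "f t \<le> sqrt (c / \<rho>) * \<rho> powr (real t / real (2 * r))" for t
  proof -
    define n where "n = t div r"
    define a where "a = real t / real (2 * r)"
    have "t = n * r + t mod r" by (simp add: n_def)
    moreover have "t mod r < r" using False by simp
    ultimately have "t < (n + 1) * r" by (simp add: algebra_simps)
    then have "real t < (real n + 1) * real r" by (metis of_nat_1 of_nat_add of_nat_less_iff of_nat_mult)
    then have "2 * a - 1 \<le> real n"
      using False by (simp add: a_def divide_le_eq algebra_simps)
    then have "\<rho> ^ n \<le> \<rho> powr (2 * a - 1)"
      using \<open>0 < \<rho>\<close> \<open>\<rho> \<le> 1\<close> by (simp add: powr_realpow[symmetric] powr_mono')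
    also have "\<dots> = (\<rho> powr a) ^ 2 / \<rho>"
    proof -
      have "(\<rho> powr a) ^ 2 = \<rho> powr (2 * a)"
        by (simp only: power2_eq_square powr_add[symmetric] mult_2)
      then show ?thesis using \<open>0 < \<rho>\<close> by (simp add: powr_diff)
    qed
    finally have "c * \<rho> ^ n \<le> c * ((\<rho> powr a) ^ 2 / \<rho>)"
      using \<open>0 < c\<close> by (intro mult_left_mono) auto
    then have "sqrt (c * \<rho> ^ n) \<le> sqrt (c / \<rho> * (\<rho> powr a) ^ 2)"
      by simp
    also have "\<dots> = sqrt (c / \<rho>) * \<rho> powr a"
      by (simp only: real_sqrt_mult real_sqrt_abs) simp
    finally show ?thesis
      using decay[of n "t mod r"] by (simp add: n_def a_def \<rho>_def)
  qed
  then show ?thesis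
    using \<open>0 < c\<close> \<open>0 < \<rho>\<close> by (intro exI[of _ "sqrt (c / \<rho>)"]) (simp add: \<rho>_def)
qed

theorem corollary1:
  fixes E :: "('n::finite \<times> 'n) set"
    and X :: "nat \<Rightarrow> real^'d::finite^'n"
    and WQ WK :: "nat \<Rightarrow> real^'q::finite^'d"
    and WV :: "nat \<Rightarrow> real^'d^'d"
    and r :: nat
  assumes dyn: "\<And>t. X (Suc t) = layernorm ((attention E (WQ t) (WK t) (X t) ** X t) ** WV t)"
    and unit0: "\<And>i. norm (X 0 $ i) = 1"
    and qsc: "quasi_strongly_connected E"
    and rad: "r = graph_radius E"
    and A1: "\<And>i. (i, i) \<in> E"
    and A2: "\<exists>B. \<forall>t. max (spec_norm (WQ t)) (spec_norm (WK t)) \<le> B"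
    and orth: "\<And>t. orthogonal_matrix (WV t)"
    and phi0: "phi (X 0) \<ge> 0"
  shows "\<exists>C>0. \<exists>\<epsilon>>0. real CARD('n) * \<epsilon> < 1 \<and>
           (\<forall>t. mu (X t) \<le> C * (1 - \<epsilon> ^ (2 * r)) powr (real t / real (2 * r)))"
proof -
  define A where "A t = attention E (WQ t) (WK t) (X t)" for t
  have stochastic: "row_stochastic (A t)" for t
    using masked_softmax_row_stochastic[OF A1] by (simp add: A_def attention_def)
  have nn0: "0 \<le> inner (X 0 $ j) (X 0 $ l)" for j l
    using phi0 phi_le_inner order_trans by blast
  note dynamics = layernorm_dynamics[OF dyn[folded A_def] stochastic orth unit0 nn0]
  obtain B where bQ: "\<And>t. spec_norm (WQ t) \<le> B" and bK: "\<And>t. spec_norm (WK t) \<le> B"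
    using A2 by auto
  have rows: "norm (X t $ i) \<le> 1" for t i using dynamics(1)[of t i] by (rule eq_refl)
  obtain \<epsilon> where \<epsilon>: "0 < \<epsilon>" "real CARD('n) * \<epsilon> < 1"
    and "\<forall>t i j. (j, i) \<in> E \<longrightarrow> \<epsilon> \<le> A t $ i $ j"
    using attention_uniform_lower_bound[where X = X and WQ = WQ and WK = WK and E = E, OF rows bQ bK]
    unfolding A_def by (elim exE conjE)
  then have AE: "\<And>t i j. (j, i) \<in> E \<Longrightarrow> \<epsilon> \<le> A t $ i $ j" by blast
  obtain c where center: "\<And>v. (c, v) \<in> E ^^ r" using graph_radius_center[OF qsc A1] rad by auto
  have "1 - inner (X (n * r + s) $ i) (X (n * r + s) $ k) \<le> (1 - \<epsilon> ^ (2 * r)) ^ n" for n s i k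
  proof (rule gap_geometric_decay[where \<delta> = "\<lambda>t j l. 1 - inner (X t $ j) (X t $ l)"
        and A = A and E = E and c = c])
    show "\<And>t j. 1 - inner (X t $ j) (X t $ j) = 0"
      using dynamics(1) by (simp add: dot_square_norm)
    show "\<And>j l. 1 - inner (X 0 $ j) (X 0 $ l) \<le> 1" using nn0 by simp
    show "0 \<le> \<epsilon>" using \<epsilon>(1) by simp
  qed (fact dynamics(2) stochastic AE center)+
  then have decay: "mu (X (n * r + s)) \<le> sqrt (2 * real CARD('n) * (1 - \<epsilon> ^ (2 * r)) ^ n)" for n s
    by (intro mu_le_sqrt_gap dynamics(1))
  have "1 \<le> real CARD('n)" by (simp add: Suc_le_eq)
  then have "\<epsilon> \<le> real CARD('n) * \<epsilon>" using mult_right_mono[of 1 _ \<epsilon>] \<epsilon>(1) by simp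
  then have "\<epsilon> < 1" using \<epsilon>(2) by linarith
  then obtain C where "0 < C"
    and "\<forall>t. mu (X t) \<le> C * (1 - \<epsilon> ^ (2 * r)) powr (real t / real (2 * r))"
    using block_decay_powr_rate[where f = "\<lambda>t. mu (X t)", OF decay _ \<epsilon>(1)] by auto
  then show ?thesis using \<epsilon> by (intro exI[of _ C] conjI exI[of _ \<epsilon>])
qed

end
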